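(* Let $n\ge 2r$. Let $\bm{U}_r,\bm{V}_r\in\mathbb{R}^{n\times r}$ have orthonormal columns spanning the column and row spaces of a rank-$r$ matrix $\bm{X}^\star\in\mathbb{R}^{n\times n}$, and let $\widetilde{\bm{U}}_r,\widetilde{\bm{V}}_r\in\mathbb{R}^{n\times r}$ have orthonormal columns. Let $\bm{U}_r^T\widetilde{\bm{U}}_r=\bm{L}_L\cos(\bm{\Gamma})\bm{R}_L^T$ and $\bm{V}_r^T\widetilde{\bm{V}}_r=\bm{L}_R\cos(\bm{H})\bm{R}_R^T$ be SVDs, with $\bm{L}_L,\bm{R}_L,\bm{L}_R,\bm{R}_R\in\mathbb{R}^{r\times r}$ orthogonal and $\bm{\Gamma}=\mathrm{diag}(\gamma_1,\dots,\gamma_r)$, $\bm{H}=\mathrm{diag}(\eta_1,\dots,\eta_r)$ the diagonal matrices of principal angles (in $[0,\pi/2]$) between $\mathrm{span}(\bm{U}_r)$ and $\mathrm{span}(\widetilde{\bm{U}}_r)$, respectively between $\mathrm{span}(\bm{V}_r)$ and $\mathrm{span}(\widetilde{\bm{V}}_r)$. Define $$\bm{A}_{cc}=\bm{L}_L\cos(\bm{\Gamma})\bm{R}_L^T\bm{R}_R\cos(\bm{H})\bm{L}_R^T,\quad \bm{A}_{cs}=\bm{L}_L\cos(\bm{\Gamma})\bm{R}_L^T\bm{R}_R\sin(\bm{H})\bm{L}_R^T,$$ $$\bm{A}_{sc}=\bm{L}_L\sin(\bm{\Gamma})\bm{R}_L^T\bm{R}_R\cos(\bm{H})\bm{L}_R^T,\quad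 \bm{A}_{ss}=\bm{L}_L\sin(\bm{\Gamma})\bm{R}_L^T\bm{R}_R\sin(\bm{H})\bm{L}_R^T.$$ Let $\lambda\ge0$ and $\bm{W}_0=\bm{U}_r\bm{V}_r^T-\lambda\mathcal{P}_{\mathcal{T}}(\widetilde{\bm{U}}_r\widetilde{\bm{V}}_r^T)$. Then $$\|\bm{W}_0\|_F=\alpha_1,\quad \|\lambda\mathcal{P}_{\mathcal{T}^\perp}(\widetilde{\bm{U}}_r\widetilde{\bm{V}}_r^T)\|=\alpha_2,\quad \|\bm{W}_0\|_{\mu(\infty,2)}\le\alpha_3\beta,\quad \|\bm{W}_0\|_{\mu(\infty)}\le\alpha_3\beta,$$ where $$\alpha_1^2=\|\bm{I}_r-\lambda\bm{A}_{cc}\|_F^2+\|\lambda\bm{A}_{cs}\|_F^2+\|\lambda\bm{A}_{sc}\|_F^2,\quad \alpha_2=\|\lambda\bm{A}_{ss}\|,$$ $$\alpha_3=\|\bm{I}_r-\lambda\bm{A}_{cc}\|+\|\lambda\bm{A}_{sc}\|+\|\lambda\bm{A}_{cs}\|,\quad \beta=1\vee\sqrt{2\max_i\frac{\breve{\mu}_i}{\mu_i}}\vee\sqrt{2\max_j\frac{\breve{\nu}_j}{\nu_j}}.$$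
   Context: Notation: $\|\cdot\|$ spectral norm, $\|\cdot\|_F$ Frobenius norm, $a\vee b=\max\{a,b\}$, $\bm{e}_i$ standard basis vectors; $\cos(\bm{\Gamma})=\mathrm{diag}(\cos\gamma_1,\dots,\cos\gamma_r)$ and similarly for $\sin$ and for $\bm{H}$. $\mathcal{P}_{\mathcal{T}}(\bm{X})=\bm{U}_r\bm{U}_r^T\bm{X}+\bm{X}\bm{V}_r\bm{V}_r^T-\bm{U}_r\bm{U}_r^T\bm{X}\bm{V}_r\bm{V}_r^T$, $\mathcal{P}_{\mathcal{T}^\perp}(\bm{X})=\bm{X}-\mathcal{P}_{\mathcal{T}}(\bm{X})$. Leverage scores: for a subspace $\mathcal{S}$ of dimension $d$ with orthonormal basis matrix $\bm{S}$, $\mu_i(\mathcal{S})=\frac{n}{d}\|\bm{S}^T\bm{e}_i\|_2^2$; $\mu_i=\mu_i(\mathrm{span}(\bm{U}_r))$, $\nu_j=\mu_j(\mathrm{span}(\bm{V}_r))$ (assumed positive), $\breve{\mu}_i=\mu_i(\mathrm{span}([\bm{U}_r,\widetilde{\bm{U}}_r]))$, $\breve{\nu}_j=\mu_j(\mathrm{span}([\bm{V}_r,\widetilde{\bm{V}}_r]))$. Norms: $\|\bm{X}\|_{\mu(\infty)}=\max_{i,j}\sqrt{\frac{n}{\mu_i r}}|X_{ij}|\sqrt{\frac{n}{\nu_j r}}$, $\|\bm{X}\|_{\mu(\infty,2)}=\max\{\max_i\sqrt{\frac{n}{\mu_i r}}\|\bm{X}^T\bm{e}_i\|_2,\max_j\sqrt{\frac{n}{\nu_j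 r}}\|\bm{X}\bm{e}_j\|_2\}$. *)

theory Defs
  imports "HOL-Analysis.Analysis"
begin

definition specnorm :: "real^'n^'m \<Rightarrow> real" where
  "specnorm A = onorm (\<lambda>x. A *v x)"

definition frobnorm :: "real^'n^'m \<Rightarrow> real" where
  "frobnorm A = sqrt (\<Sum>i\<in>UNIV. \<Sum>j\<in>UNIV. (A $ i $ j)^2)"

definition diag_mat :: "real^'r \<Rightarrow> real^'r^'r" where
  "diag_mat v = (\<chi> i j. if i = j then v $ i else 0)"

text \<open>Leverage score of a subspace S of R^n at coordinate i:
  (n / dim S) * norm (B^T e_i)^2 where the columns of B form an orthonormal basis of S.\<close>
definition onb_of :: "(real^'n) set \<Rightarrow> (real^'n) set" where
  "onb_of S = (SOME B. finite B \<and> pairwise orthogonal B \<and> (\<forall>b\<in>B. norm b = 1) \<and> span B = S)"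

definition leverage :: "(real^'n) set \<Rightarrow> 'n \<Rightarrow> real" where
  "leverage S i = real CARD('n) / real (dim S) * (\<Sum>b\<in>onb_of S. (b $ i)^2)"

definition PT :: "real^'r^'n \<Rightarrow> real^'r^'n \<Rightarrow> real^'n^'n \<Rightarrow> real^'n^'n" where
  "PT U V X = U ** transpose U ** X + X ** V ** transpose V
              - U ** transpose U ** X ** V ** transpose V"

definition PTperp :: "real^'r^'n \<Rightarrow> real^'r^'n \<Rightarrow> real^'n^'n \<Rightarrow> real^'n^'n" where
  "PTperp U V X = X - PT U V X"

definition mu_inf_norm :: "real^'r^'n \<Rightarrow> real^'r^'n \<Rightarrow> real^'n^'n \<Rightarrow> real" where
  "mu_inf_norm U V X = (let n = real CARD('n); r = real CARD('r);
      mu = leverage (span (columns U)); nu = leverage (span (columns V)) in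
      Max {sqrt (n / (mu i * r)) * \<bar>X $ i $ j\<bar> * sqrt (n / (nu j * r)) | i j. True})"

definition mu_inf2_norm :: "real^'r^'n \<Rightarrow> real^'r^'n \<Rightarrow> real^'n^'n \<Rightarrow> real" where
  "mu_inf2_norm U V X = (let n = real CARD('n); r = real CARD('r);
      mu = leverage (span (columns U)); nu = leverage (span (columns V)) in
      max (Max {sqrt (n / (mu i * r)) * norm (row i X) | i. True})
          (Max {sqrt (n / (nu j * r)) * norm (column j X) | j. True}))"

end

(*
  Write Ut = U N + Eu and Vt = V M + Ev with N = U^T Ut, M = V^T Vt and residuals Eu, Ev
  orthogonal to U and V.  Since Ut^T Ut = I, the SVD N = LL cos(Gamma) RL^T forces
  Eu^T Eu = Su^T Su for Su = LL sin(Gamma) RL^T, so Eu may be replaced by Su in every norm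
  taken from the left (likewise Ev by Sv = LR sin(H) RR^T).  Expanding P_T gives

    W0 = U (I - lam N M^T) V^T - lam U N Ev^T - lam Eu M^T V^T,   P_T^perp(Ut Vt^T) = Eu Ev^T,

  three mutually orthogonal pieces whose Frobenius norms are those of I - lam Acc, lam Acs and
  lam Asc.  For the mu-norms, e_i^T U has norm sqrt(mu_i r / n), while e_i^T Eu = p^T Eu for the
  projection p of e_i onto span [U, Ut]; that space has dimension at most 2r, so
  |p|^2 <= 2 r mub_i / n.  After weighting by sqrt(n / (mu_i r)) every term is bounded by a
  spectral norm times beta.
*)
theory Submission
  imports Defs
begin

declare transpose_matrix_vector [simp del] vector_transpose_matrix [simp del]

lemma matrix_add_rdistrib: "(A + B) ** C = A ** C + B ** (C :: 'a::semiring_1^_^_)"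
  by (vector matrix_matrix_mult_def sum.distrib[symmetric] field_simps)

lemma matrix_diff_ldistrib: "(A :: 'a::ring_1^_^_) ** (B - C) = A ** B - A ** C"
  by (vector matrix_matrix_mult_def sum_subtractf[symmetric] field_simps)

lemma matrix_diff_rdistrib: "((A :: 'a::ring_1^_^_) - B) ** C = A ** C - B ** C"
  by (vector matrix_matrix_mult_def sum_subtractf[symmetric] field_simps)

lemma transpose_diff: "transpose ((A :: 'a::ab_group_add^_^_) - B) = transpose A - transpose B"
  by (vector transpose_def)

lemma transpose_diag_mat: "transpose (diag_mat v) = diag_mat v"
  by (vector transpose_def diag_mat_def)

lemma diag_mat_mult: "diag_mat a ** diag_mat b = diag_mat (\<chi> k. a $ k * b $ k)"
proof -
  have "(\<Sum>k\<in>UNIV. (if i = k then a $ i else 0) * (if k = j then b $ k else 0))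
      = (\<Sum>k\<in>UNIV. if k = i then a $ i * (if i = j then b $ i else 0) else 0)" for i j
    by (rule sum.cong) auto
  then show ?thesis
    unfolding diag_mat_def matrix_matrix_mult_def by (simp add: vec_eq_iff)
qed

lemma diag_mat_add: "diag_mat a + diag_mat b = diag_mat (a + b)"
  by (vector diag_mat_def)

lemma diag_mat_one: "diag_mat (\<chi> k. 1) = mat 1"
  by (vector diag_mat_def mat_def)

lemma transpose_svd: "transpose (L ** diag_mat v ** transpose R) = R ** diag_mat v ** transpose L"
  by (simp add: matrix_transpose_mul transpose_diag_mat matrix_mul_assoc)

lemma inner_matrix_vector: "inner ((A :: real^'n^'m) *v x) y = inner x (transpose A *v y)"
  by (metis dot_lmul_matrix inner_commute transpose_matrix_vector)

lemma inner_matrix_vector_right: "inner x ((A :: real^'n^'m) *v y) = inner (transpose A *v x) y"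
  by (metis inner_commute inner_matrix_vector)

lemma transpose_mult_mult_eq_0:
  assumes "transpose A ** B = (0 :: real^_^_)"
  shows "transpose (A ** X) ** (B ** Y) = 0"
proof -
  have "transpose (A ** X) ** (B ** Y) = transpose X ** (transpose A ** B) ** Y"
    by (simp only: matrix_transpose_mul matrix_mul_assoc)
  then show ?thesis
    by (simp add: assms)
qed

lemma norm_sq_matrix_vector:
  "(norm ((A :: real^'n^'m) *v x))^2 = inner x ((transpose A ** A) *v x)"
  by (simp add: power2_norm_eq_inner inner_matrix_vector flip: matrix_vector_mul_assoc)

lemma norm_mult_eq_if_gram_eq:
  fixes A :: "real^'n^'m" and B :: "real^'n^'k"
  assumes "transpose A ** A = transpose B ** B"
  shows "norm (A *v x) = norm (B *v x)"
  by (rule power2_eq_imp_eq) (simp_all only: norm_sq_matrix_vector assms norm_ge_zero)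

lemma norm_isometry: "transpose U ** U = mat 1 \<Longrightarrow> norm ((U :: real^'r^'n) *v x) = norm x"
  using norm_mult_eq_if_gram_eq[of U "mat 1 :: real^'r^'r"] by simp

lemma bounded_linear_matrix_vector: "bounded_linear (\<lambda>x. (A :: real^'n^'m) *v x)"
  by (simp add: linear_conv_bounded_linear)

lemma specnorm_bound: "norm (A *v x) \<le> specnorm A * norm x"
  unfolding specnorm_def by (rule onorm[OF bounded_linear_matrix_vector])

lemma specnorm_nonneg: "specnorm A \<ge> 0"
  unfolding specnorm_def by (rule onorm_pos_le[OF bounded_linear_matrix_vector])

lemma abs_inner_le_specnorm: "\<bar>inner x (A *v y)\<bar> \<le> specnorm A * norm x * norm y"
proof -
  have "\<bar>inner x (A *v y)\<bar> \<le> norm x * norm (A *v y)"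
    by (rule Cauchy_Schwarz_ineq2)
  also have "\<dots> \<le> norm x * (specnorm A * norm y)"
    by (simp add: mult_left_mono specnorm_bound)
  finally show ?thesis
    by (simp add: ac_simps)
qed

lemma specnorm_transpose_le: "specnorm (transpose (A :: real^'n^'m)) \<le> specnorm A"
  unfolding specnorm_def
proof (rule onorm_le)
  fix y :: "real^'m"
  let ?z = "transpose A *v y"
  have "inner y (A *v ?z) = inner ?z ?z"
    by (metis inner_commute inner_matrix_vector)
  then have "norm ?z * norm ?z = \<bar>inner y (A *v ?z)\<bar>"
    by (simp add: power2_norm_eq_inner flip: power2_eq_square)
  also have "\<dots> \<le> norm ?z * (specnorm A * norm y)"
    using abs_inner_le_specnorm[of y A ?z] by (simp add: ac_simps)
  finally show "norm ?z \<le> onorm ((*v) A) * norm y"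
    unfolding specnorm_def
    by (cases "?z = 0") (simp_all add: onorm_pos_le[OF bounded_linear_matrix_vector])
qed

lemma specnorm_transpose: "specnorm (transpose (A :: real^'n^'m)) = specnorm A"
  using specnorm_transpose_le[of A] specnorm_transpose_le[of "transpose A"] by simp

lemma norm_transpose_bound: "norm (transpose A *v x) \<le> specnorm A * norm x"
  using specnorm_bound[of "transpose A" x] by (simp add: specnorm_transpose)

lemma specnorm_mult_eq_if_gram_eq:
  fixes A :: "real^'n^'m" and B :: "real^'n^'k" and C :: "real^'p^'n"
  assumes "transpose A ** A = transpose B ** B"
  shows "specnorm (A ** C) = specnorm (B ** C)"
  unfolding specnorm_def onorm_def
  by (simp only: norm_mult_eq_if_gram_eq[OF assms] flip: matrix_vector_mul_assoc)

lemma specnorm_mult_eq_if_cogram_eq: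
  fixes A :: "real^'m^'n" and B :: "real^'k^'n" and C :: "real^'n^'p"
  assumes "A ** transpose A = B ** transpose B"
  shows "specnorm (C ** A) = specnorm (C ** B)"
  using specnorm_mult_eq_if_gram_eq[of "transpose A" "transpose B" "transpose C"] assms
  by (simp add: specnorm_transpose flip: matrix_transpose_mul)

lemma specnorm_scaleR: "specnorm (c *\<^sub>R (A :: real^'n^'m)) = \<bar>c\<bar> * specnorm A"
  unfolding specnorm_def using onorm_scaleR[OF bounded_linear_matrix_vector, of c A]
  by (simp add: scaleR_matrix_vector_assoc)

lemma frobnorm_nonneg: "frobnorm A \<ge> 0"
  by (simp add: frobnorm_def sum_nonneg)

lemma frobnorm_sq_columns:
  "(frobnorm (A :: real^'n^'m))^2 = (\<Sum>j\<in>UNIV. (norm (A *v axis j 1))^2)"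
proof -
  have "(frobnorm A)^2 = (\<Sum>i\<in>UNIV. \<Sum>j\<in>UNIV. (A $ i $ j)^2)"
    by (simp add: frobnorm_def sum_nonneg)
  also have "\<dots> = (\<Sum>j\<in>UNIV. inner (column j A) (column j A))"
    by (subst sum.swap) (simp add: column_def inner_vec_def power2_eq_square)
  finally show ?thesis
    by (simp add: matrix_vector_mult_basis power2_norm_eq_inner)
qed

lemma frobnorm_transpose: "frobnorm (transpose A) = frobnorm A"
  unfolding frobnorm_def transpose_def by (subst sum.swap) simp

lemma frobnorm_mult_eq_if_gram_eq:
  fixes A :: "real^'n^'m" and B :: "real^'n^'k" and C :: "real^'p^'n"
  assumes "transpose A ** A = transpose B ** B"
  shows "frobnorm (A ** C) = frobnorm (B ** C)"
  by (rule power2_eq_imp_eq)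
    (simp_all only: frobnorm_sq_columns frobnorm_nonneg norm_mult_eq_if_gram_eq[OF assms]
      flip: matrix_vector_mul_assoc)

lemma frobnorm_mult_eq_if_cogram_eq:
  fixes A :: "real^'m^'n" and B :: "real^'k^'n" and C :: "real^'n^'p"
  assumes "A ** transpose A = B ** transpose B"
  shows "frobnorm (C ** A) = frobnorm (C ** B)"
  using frobnorm_mult_eq_if_gram_eq[of "transpose A" "transpose B" "transpose C"] assms
  by (simp add: frobnorm_transpose flip: matrix_transpose_mul)

lemma frobnorm_isometry_left:
  "transpose U ** U = mat 1 \<Longrightarrow> frobnorm ((U :: real^'r^'n) ** A) = frobnorm A"
  using frobnorm_mult_eq_if_gram_eq[of U "mat 1 :: real^'r^'r" A] by simp

lemma frobnorm_isometry_right: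
  "transpose V ** V = mat 1 \<Longrightarrow> frobnorm (A ** transpose (V :: real^'r^'n)) = frobnorm A"
  using frobnorm_mult_eq_if_cogram_eq[of "transpose V" "mat 1 :: real^'r^'r" A] by simp

lemma frobnorm_diff_sq:
  fixes A B :: "real^'n^'m"
  assumes "transpose A ** B = 0"
  shows "(frobnorm (A - B))^2 = (frobnorm A)^2 + (frobnorm B)^2"
proof -
  have "orthogonal (A *v x) (- (B *v y))" for x y
    by (simp add: orthogonal_def inner_matrix_vector matrix_vector_mul_assoc assms)
  then have "(norm (A *v axis j 1 - B *v axis j 1))^2
      = (norm (A *v axis j 1))^2 + (norm (B *v axis j 1))^2" for j
    using norm_add_Pythagorean by (metis norm_minus_cancel diff_conv_add_uminus)
  then show ?thesis
    by (simp add: frobnorm_sq_columns matrix_vector_mult_diff_rdistrib sum.distrib)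
qed

lemma onb_of:
  fixes S :: "(real^'n) set"
  assumes "subspace S"
  shows "finite (onb_of S)" and "pairwise orthogonal (onb_of S)"
    and "\<And>b. b \<in> onb_of S \<Longrightarrow> norm b = 1" and "span (onb_of S) = S"
proof -
  have "\<exists>B. finite B \<and> pairwise orthogonal B \<and> (\<forall>b\<in>B. norm b = 1) \<and> span B = S"
    by (metis orthonormal_basis_subspace[OF assms] independent_imp_finite)
  then have "finite (onb_of S) \<and> pairwise orthogonal (onb_of S) \<and> (\<forall>b\<in>onb_of S. norm b = 1)
      \<and> span (onb_of S) = S"
    unfolding onb_of_def by (rule someI_ex)
  then show "finite (onb_of S)" "pairwise orthogonal (onb_of S)"
    "\<And>b. b \<in> onb_of S \<Longrightarrow> norm b = 1" "span (onb_of S) = S"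
    by auto
qed

lemma norm_sq_orthonormal_expand:
  assumes "finite B" "pairwise orthogonal B" "\<And>b. b \<in> B \<Longrightarrow> norm b = 1" "x \<in> span B"
  shows "(norm x)^2 = (\<Sum>b\<in>B. (inner x b)^2)"
proof -
  have "x = (\<Sum>b\<in>B. inner x b *\<^sub>R b)"
    using orthonormal_basis_expand[OF assms(2,3,4,1)] by simp
  then have "inner x x = inner x (\<Sum>b\<in>B. inner x b *\<^sub>R b)"
    by simp
  then show ?thesis
    unfolding power2_norm_eq_inner by (simp add: inner_sum_right power2_eq_square)
qed

lemma leverage_eq_norm_proj:
  fixes S :: "(real^'n) set"
  assumes "subspace S" "p \<in> S" "\<And>s. s \<in> S \<Longrightarrow> orthogonal (axis i 1 - p) s"
  shows "leverage S i = real CARD('n) / real (dim S) * (norm p)^2"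
proof -
  note B = onb_of[OF assms(1)]
  have "b $ i = inner p b" if "b \<in> onb_of S" for b
  proof -
    have "inner (axis i 1 - p) b = 0"
      using assms(3) B(4) span_base[OF that] by (simp add: orthogonal_def)
    then show ?thesis
      by (simp add: inner_diff_left inner_diff_right cart_eq_inner_axis inner_commute)
  qed
  then have "(\<Sum>b\<in>onb_of S. (b $ i)^2) = (norm p)^2"
    using norm_sq_orthonormal_expand[OF B(1-3)] assms(2) B(4) by simp
  then show ?thesis
    unfolding leverage_def by simp
qed

lemma leverage_nonneg: "leverage S i \<ge> 0"
  by (simp add: leverage_def sum_nonneg)

lemma dim_columns_isometry:
  fixes U :: "real^'r^'n"
  assumes "transpose U ** U = mat 1"
  shows "dim (columns U) = CARD('r)"
proof -
  have "inj ((*v) U)"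
  proof (rule injI)
    fix x y assume "U *v x = U *v y"
    then have "(transpose U ** U) *v x = (transpose U ** U) *v y"
      by (simp flip: matrix_vector_mul_assoc)
    then show "x = y"
      using assms by simp
  qed
  then show ?thesis
    by (simp add: full_rank_injective flip: column_rank_def)
qed

lemma leverage_span_columns:
  fixes U :: "real^'r^'n"
  assumes "transpose U ** U = mat 1"
  shows "leverage (span (columns U)) i
    = real CARD('n) / real CARD('r) * (norm (transpose U *v axis i 1))^2"
proof -
  let ?p = "U *v (transpose U *v axis i 1)"
  have orth_range: "orthogonal (axis i 1 - ?p) (U *v a)" for a
    by (simp add: orthogonal_def inner_commute[of _ "U *v a"] inner_matrix_vector
        matrix_vector_mult_diff_distrib matrix_vector_mul_assoc matrix_mul_assoc assms)
  have "orthogonal (axis i 1 - ?p) s" if "s \<in> span (columns U)" for s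
    using that by (rule orthogonal_to_span) (auto simp: columns_image_basis orth_range)
  then have "leverage (span (columns U)) i
      = real CARD('n) / real (dim (span (columns U))) * (norm ?p)^2"
    by (intro leverage_eq_norm_proj subspace_span matrix_vector_mult_in_columnspace)
  then show ?thesis
    by (simp add: dim_columns_isometry norm_isometry assms)
qed

lemma dim_span_columns_Un:
  fixes U W :: "real^'r^'n"
  assumes "transpose U ** U = mat 1"
  shows "CARD('r) \<le> dim (span (columns U \<union> columns W))"
    and "dim (span (columns U \<union> columns W)) \<le> 2 * CARD('r)"
proof -
  have "dim (columns U) \<le> dim (span (columns U \<union> columns W))"
    using dim_subset[OF span_mono[OF Un_upper1], of "columns U" "columns W"] by simp
  then show "CARD('r) \<le> dim (span (columns U \<union> columns W))"
    by (simp only: dim_columns_isometry[OF assms])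
  have card_columns: "card (columns A) \<le> CARD('r)" for A :: "real^'r^'n"
    unfolding columns_image_basis image_image by (rule card_image_le) simp
  have "dim (span (columns U \<union> columns W)) \<le> card (columns U \<union> columns W)"
    by (simp add: dim_le_card' columns_image_basis)
  also have "\<dots> \<le> card (columns U) + card (columns W)"
    by (rule card_Un_le)
  finally show "dim (span (columns U \<union> columns W)) \<le> 2 * CARD('r)"
    using card_columns[of U] card_columns[of W] by linarith
qed

lemma leverage_span_columns_Un:
  fixes U W :: "real^'r^'n"
  assumes "transpose U ** U = mat 1"
  obtains p where "p \<in> span (columns U \<union> columns W)"
    and "\<And>s. s \<in> span (columns U \<union> columns W) \<Longrightarrow> orthogonal (axis i 1 - p) s"
    and "real CARD('n) * (norm p)^2
      \<le> 2 * real CARD('r) * leverage (span (columns U \<union> columns W)) i"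
proof -
  let ?S = "span (columns U \<union> columns W)"
  obtain p q where p: "p \<in> ?S" "\<And>s. s \<in> ?S \<Longrightarrow> orthogonal q s" "axis i 1 = p + q"
    using orthogonal_subspace_decomp_exists[of "columns U \<union> columns W" "axis i 1"] by metis
  have orth: "orthogonal (axis i 1 - p) s" if "s \<in> ?S" for s
    using p(2)[OF that] p(3) by (simp add: algebra_simps)
  define d where "d = dim ?S"
  have lev: "leverage ?S i = real CARD('n) / real d * (norm p)^2"
    unfolding d_def by (rule leverage_eq_norm_proj[OF subspace_span p(1) orth])
  have "0 < d"
    using dim_span_columns_Un(1)[OF assms, of W] unfolding d_def
    by (metis zero_less_card_finite order_less_le_trans)
  then have "real CARD('n) * (norm p)^2 = real d * leverage ?S i"
    unfolding lev by (simp add: field_simps)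
  also have "\<dots> \<le> 2 * real CARD('r) * leverage ?S i"
    using dim_span_columns_Un(2)[OF assms, of W] unfolding d_def
    by (intro mult_right_mono) (simp_all add: leverage_nonneg)
  finally show ?thesis
    using p(1) orth that by blast
qed

lemma transpose_mult_eq_if_orthogonal:
  fixes E :: "real^'p^'n"
  assumes "\<And>z. E *v z \<in> S" and "\<And>s. s \<in> S \<Longrightarrow> orthogonal (x - p) s"
  shows "transpose E *v x = transpose E *v p"
proof -
  let ?d = "transpose E *v (x - p)"
  have "inner ?d ?d = inner (E *v ?d) (x - p)"
    by (simp add: inner_matrix_vector)
  also have "\<dots> = 0"
    using assms(2)[OF assms(1)] by (metis inner_commute orthogonal_def)
  finally show ?thesis
    by (simp add: matrix_vector_mult_diff_distrib)
qed

lemma le_Max_setcompr: "f i \<le> Max {f i | i. True}" for f :: "'a::finite \<Rightarrow> 'b::linorder"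
proof -
  have "{f i | i. True} = range f"
    by auto
  then show ?thesis
    by simp
qed

lemma mu_inf2_norm_le:
  fixes U V :: "real^'r^'n" and X :: "real^'n^'n"
  assumes "\<And>i. sqrt (real CARD('n) / (leverage (span (columns U)) i * real CARD('r)))
      * norm (row i X) \<le> b"
    and "\<And>j. sqrt (real CARD('n) / (leverage (span (columns V)) j * real CARD('r)))
      * norm (column j X) \<le> b"
  shows "mu_inf2_norm U V X \<le> b"
proof -
  have "{f i | i. True} = range f" for f :: "'n \<Rightarrow> real"
    by auto
  then show ?thesis
    unfolding mu_inf2_norm_def Let_def using assms by simp
qed

lemma mu_inf_norm_le:
  fixes U V :: "real^'r^'n" and X :: "real^'n^'n"
  assumes "\<And>i j. sqrt (real CARD('n) / (leverage (span (columns U)) i * real CARD('r)))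
      * \<bar>X $ i $ j\<bar> * sqrt (real CARD('n) / (leverage (span (columns V)) j * real CARD('r)))
      \<le> b"
  shows "mu_inf_norm U V X \<le> b"
proof -
  have "{f i j | i j. True} = (\<lambda>(i, j). f i j) ` UNIV" for f :: "'n \<Rightarrow> 'n \<Rightarrow> real"
    by auto
  then show ?thesis
    unfolding mu_inf_norm_def Let_def using assms by simp
qed

lemma weighted_sum_le:
  fixes k s t a a' b b' \<beta> :: real
  assumes "0 \<le> k" "0 \<le> s" "0 \<le> t" and "1 \<le> \<beta>"
    and "0 \<le> a" "a \<le> 1" "0 \<le> a'" "a' \<le> 1" "0 \<le> b" "b \<le> \<beta>" "0 \<le> b'" "b' \<le> \<beta>"
  shows "k * a * a' + s * a * b' + t * b * a' \<le> (k + s + t) * \<beta>"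
proof -
  have "a * a' \<le> \<beta>" "a * b' \<le> \<beta>" "b * a' \<le> \<beta>"
    using assms mult_mono[of a 1 a' 1] mult_mono[of a 1 b' \<beta>] mult_mono[of b \<beta> a' 1]
    by simp_all
  then have "k * (a * a') \<le> k * \<beta>" "s * (a * b') \<le> s * \<beta>" "t * (b * a') \<le> t * \<beta>"
    using assms(1-3) by (simp_all add: mult_left_mono)
  then show ?thesis
    by (simp add: algebra_simps)
qed

text \<open>\<open>S\<close> plays the role of \<open>L sin \<Gamma> R\<^sup>T\<close> when \<open>U\<^sup>T Ut = L cos \<Gamma> R\<^sup>T\<close>.\<close>
locale principal_angles =
  fixes U Ut :: "real^'r^'n" and S :: "real^'r^'r"
  assumes orthonormal: "transpose U ** U = mat 1"
    and orthonormal': "transpose Ut ** Ut = mat 1"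
    and cos_sin: "transpose (transpose U ** Ut) ** (transpose U ** Ut) + transpose S ** S = mat 1"
begin

definition residual :: "real^'r^'n" where
  "residual = Ut - U ** (transpose U ** Ut)"

lemma residual_perp: "transpose U ** residual = 0"
  by (simp add: residual_def matrix_diff_ldistrib matrix_mul_assoc orthonormal)

lemma residual_gram: "transpose residual ** residual = transpose S ** S"
proof -
  let ?N = "transpose U ** Ut"
  have "transpose residual = transpose Ut - transpose ?N ** transpose U"
    by (simp add: residual_def transpose_diff matrix_transpose_mul)
  then have "transpose residual ** residual
      = transpose Ut ** Ut - transpose Ut ** (U ** ?N)
        - (transpose ?N ** transpose U ** Ut - transpose ?N ** transpose U ** (U ** ?N))"
    by (simp add: residual_def matrix_diff_ldistrib matrix_diff_rdistrib)
  also have "transpose ?N ** transpose U ** (U ** ?N) = transpose ?N ** ?N"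
    by (metis orthonormal matrix_mul_assoc matrix_mul_rid)
  also have "transpose Ut ** (U ** ?N) = transpose ?N ** ?N"
    by (simp add: matrix_transpose_mul matrix_mul_assoc)
  also have "transpose ?N ** transpose U ** Ut = transpose ?N ** ?N"
    by (simp add: matrix_mul_assoc)
  finally have "transpose residual ** residual = mat 1 - transpose ?N ** ?N"
    by (simp add: orthonormal')
  also have "\<dots> = transpose S ** S"
    using cos_sin by (metis add_diff_cancel_left')
  finally show ?thesis .
qed

lemma residual_range: "residual *v z \<in> span (columns U \<union> columns Ut)"
proof -
  have "Ut *v z \<in> span (columns U \<union> columns Ut)"
    and "U *v y \<in> span (columns U \<union> columns Ut)" for y
    using matrix_vector_mult_in_columnspace span_mono[OF Un_upper1] span_mono[OF Un_upper2] by blast+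
  then show ?thesis
    by (simp add: residual_def matrix_vector_mult_diff_rdistrib span_diff flip: matrix_vector_mul_assoc)
qed

definition weight :: "'n \<Rightarrow> real" where
  "weight i = sqrt (real CARD('n) / (leverage (span (columns U)) i * real CARD('r)))"

lemma weight_nonneg: "weight i \<ge> 0"
  by (simp add: weight_def leverage_nonneg)

lemma weight_mult_norm:
  assumes "leverage (span (columns U)) i > 0"
  shows "weight i * norm (transpose U *v axis i 1) = 1"
proof -
  have mu: "leverage (span (columns U)) i
      = real CARD('n) / real CARD('r) * (norm (transpose U *v axis i 1))^2"
    by (rule leverage_span_columns[OF orthonormal])
  with assms have pos: "norm (transpose U *v axis i 1) > 0"
    by (cases "norm (transpose U *v axis i 1) = 0") simp_all
  then have "weight i = 1 / norm (transpose U *v axis i 1)"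
    unfolding weight_def mu by (simp add: real_sqrt_divide)
  then show ?thesis
    using pos by simp
qed

text \<open>The residual only sees the projection \<open>p\<close> of \<open>e\<^sub>i\<close> onto the span of both frames,
  whose norm is controlled by the leverage score of that larger subspace.\<close>
lemma weighted_axis:
  assumes mu_pos: "leverage (span (columns U)) i > 0"
    and \<beta>: "sqrt (2 * Max {leverage (span (columns U \<union> columns Ut)) j
                           / leverage (span (columns U)) j | j. True}) \<le> \<beta>"
  obtains p where "transpose residual *v (weight i *\<^sub>R axis i 1) = transpose residual *v p"
    and "norm (transpose U *v (weight i *\<^sub>R axis i 1)) = 1"
    and "norm p \<le> \<beta>"
proof -
  let ?mu = "leverage (span (columns U)) i"
  let ?mub = "leverage (span (columns U \<union> columns Ut)) i"
  obtain q where q: "q \<in> span (columns U \<union> columns Ut)"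
      "\<And>s. s \<in> span (columns U \<union> columns Ut) \<Longrightarrow> orthogonal (axis i 1 - q) s"
      "real CARD('n) * (norm q)^2 \<le> 2 * real CARD('r) * ?mub"
    using leverage_span_columns_Un[OF orthonormal, where W = Ut and i = i] by blast
  have "transpose residual *v axis i 1 = transpose residual *v q"
    by (rule transpose_mult_eq_if_orthogonal[OF residual_range q(2)])
  then have "transpose residual *v (weight i *\<^sub>R axis i 1)
      = transpose residual *v (weight i *\<^sub>R q)"
    by (simp add: matrix_vector_mult_scaleR)
  moreover have "norm (transpose U *v (weight i *\<^sub>R axis i 1)) = 1"
    using weight_mult_norm[OF mu_pos] weight_nonneg[of i] by (simp add: matrix_vector_mult_scaleR)
  moreover have "(norm (weight i *\<^sub>R q))^2 \<le> 2 * (?mub / ?mu)"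
  proof -
    have "(norm (weight i *\<^sub>R q))^2 = real CARD('n) * (norm q)^2 / (real CARD('r) * ?mu)"
      using mu_pos by (simp add: weight_def power_mult_distrib leverage_nonneg)
    also have "\<dots> \<le> 2 * real CARD('r) * ?mub / (real CARD('r) * ?mu)"
      using q(3) mu_pos by (intro divide_right_mono) simp_all
    finally show ?thesis
      by simp
  qed
  then have "norm (weight i *\<^sub>R q) \<le> \<beta>"
    using \<beta> le_Max_setcompr[of "\<lambda>j. leverage (span (columns U \<union> columns Ut)) j
        / leverage (span (columns U)) j" i]
    by (smt (verit) real_le_rsqrt real_sqrt_le_mono)
  ultimately show ?thesis
    using that by blast
qed

end

lemma gram_svd:
  assumes "orthogonal_matrix L"
  shows "transpose (L ** diag_mat v ** transpose R) ** (L ** diag_mat v ** transpose R)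
    = R ** diag_mat (\<chi> k. v $ k * v $ k) ** transpose R"
proof -
  have "transpose L ** L = mat 1"
    using assms by (simp add: orthogonal_matrix_def)
  have "transpose (L ** diag_mat v ** transpose R) ** (L ** diag_mat v ** transpose R)
      = R ** (diag_mat v ** (transpose L ** L) ** diag_mat v) ** transpose R"
    by (simp only: transpose_svd matrix_mul_assoc)
  also have "\<dots> = R ** (diag_mat v ** diag_mat v) ** transpose R"
    by (simp add: \<open>transpose L ** L = mat 1\<close>)
  finally show ?thesis
    by (simp only: diag_mat_mult)
qed

lemma principal_angles_svd:
  fixes U Ut :: "real^'r^'n" and L R :: "real^'r^'r" and \<theta> :: "real^'r"
  assumes "transpose U ** U = mat 1" and "transpose Ut ** Ut = mat 1"
    and L: "orthogonal_matrix L" and R: "orthogonal_matrix R"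
    and svd: "transpose U ** Ut = L ** diag_mat (\<chi> k. cos (\<theta> $ k)) ** transpose R"
  shows "principal_angles U Ut (L ** diag_mat (\<chi> k. sin (\<theta> $ k)) ** transpose R)"
proof
  let ?cc = "diag_mat (\<chi> k. cos (\<theta> $ k) * cos (\<theta> $ k))"
  let ?ss = "diag_mat (\<chi> k. sin (\<theta> $ k) * sin (\<theta> $ k))"
  have "(\<chi> k. cos (\<theta> $ k) * cos (\<theta> $ k)) + (\<chi> k. sin (\<theta> $ k) * sin (\<theta> $ k))
      = (\<chi> k. (1::real))"
    by (simp add: vec_eq_iff flip: power2_eq_square)
  then have "?cc + ?ss = mat 1"
    by (simp only: diag_mat_add diag_mat_one)
  then have "R ** (?cc + ?ss) ** transpose R = mat 1"
    using R by (simp add: orthogonal_matrix_def)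
  then show "transpose (transpose U ** Ut) ** (transpose U ** Ut)
      + transpose (L ** diag_mat (\<chi> k. sin (\<theta> $ k)) ** transpose R)
        ** (L ** diag_mat (\<chi> k. sin (\<theta> $ k)) ** transpose R) = mat 1"
    by (simp only: svd gram_svd[OF L] matrix_add_ldistrib matrix_add_rdistrib vec_lambda_beta)
qed (fact assms)+

locale principal_angle_pair =
  left: principal_angles U Ut Su + right: principal_angles V Vt Sv
  for U Ut :: "real^'r^'n" and Su :: "real^'r^'r" and V Vt :: "real^'r^'n" and Sv :: "real^'r^'r"
begin

text \<open>\<open>block K B C\<close> is \<open>[U, Eu] [[K, -B], [-C, 0]] [V, Ev]\<^sup>T\<close> for the residuals
  \<open>Eu\<close>, \<open>Ev\<close> of the two frames.\<close>
definition block :: "real^'r^'r \<Rightarrow> real^'r^'r \<Rightarrow> real^'r^'r \<Rightarrow> real^'n^'n" where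
  "block K B C = U ** K ** transpose V - U ** B ** transpose right.residual
    - left.residual ** C ** transpose V"

sublocale swap: principal_angle_pair V Vt Sv U Ut Su
  by (rule principal_angle_pair.intro)
    (fact right.principal_angles_axioms left.principal_angles_axioms)+

lemma transpose_block:
  "transpose (block K B C) = swap.block (transpose K) (transpose C) (transpose B)"
  unfolding block_def swap.block_def
  by (simp only: transpose_diff matrix_transpose_mul transpose_transpose matrix_mul_assoc)
    (simp add: algebra_simps)

lemma tangent_decomposition:
  "U ** transpose V - lam *\<^sub>R PT U V (Ut ** transpose Vt)
    = block (mat 1 - lam *\<^sub>R (transpose U ** Ut ** transpose (transpose V ** Vt)))
        (lam *\<^sub>R (transpose U ** Ut)) (lam *\<^sub>R transpose (transpose V ** Vt))"
proof -
  have PT: "PT U V (Ut ** transpose Vt) = U ** (transpose U ** Ut) ** transpose Vt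
      + Ut ** transpose (transpose V ** Vt) ** transpose V
      - U ** (transpose U ** Ut ** transpose (transpose V ** Vt)) ** transpose V"
    by (simp add: PT_def matrix_transpose_mul matrix_mul_assoc)
  show ?thesis
    unfolding PT by (simp add: block_def left.residual_def right.residual_def matrix_diff_ldistrib
        matrix_diff_rdistrib transpose_diff matrix_transpose_mul matrix_mul_assoc matrix_scalar_ac
        algebra_simps flip: scalar_matrix_assoc)
qed

lemma PTperp_eq_residuals:
  "PTperp U V (Ut ** transpose Vt) = left.residual ** transpose right.residual"
  by (simp add: PTperp_def PT_def left.residual_def right.residual_def matrix_diff_ldistrib
      matrix_diff_rdistrib transpose_diff matrix_transpose_mul matrix_mul_assoc)

lemma frobnorm_block:
  "frobnorm (block K B C)
    = sqrt ((frobnorm K)^2 + (frobnorm (B ** transpose Sv))^2 + (frobnorm (Su ** C))^2)"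
proof -
  let ?X = "K ** transpose V - B ** transpose right.residual"
  have "block K B C = U ** ?X - left.residual ** (C ** transpose V)"
    by (simp add: block_def matrix_diff_ldistrib matrix_mul_assoc)
  then have "(frobnorm (block K B C))^2
      = (frobnorm (U ** ?X))^2 + (frobnorm (left.residual ** (C ** transpose V)))^2"
    by (simp only: frobnorm_diff_sq transpose_mult_mult_eq_0 left.residual_perp)
  also have "frobnorm (U ** ?X) = frobnorm (transpose ?X)"
    by (simp only: frobnorm_isometry_left[OF left.orthonormal] frobnorm_transpose)
  also have "transpose ?X = V ** transpose K - right.residual ** transpose B"
    by (simp only: transpose_diff matrix_transpose_mul transpose_transpose)
  also have "(frobnorm (V ** transpose K - right.residual ** transpose B))^2
      = (frobnorm (V ** transpose K))^2 + (frobnorm (right.residual ** transpose B))^2"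
    by (simp only: frobnorm_diff_sq transpose_mult_mult_eq_0 right.residual_perp)
  also have "frobnorm (V ** transpose K) = frobnorm K"
    by (simp add: frobnorm_isometry_left right.orthonormal frobnorm_transpose)
  also have "frobnorm (right.residual ** transpose B) = frobnorm (B ** transpose Sv)"
    by (simp only: frobnorm_mult_eq_if_gram_eq[OF right.residual_gram])
      (metis frobnorm_transpose matrix_transpose_mul transpose_transpose)
  also have "frobnorm (left.residual ** (C ** transpose V)) = frobnorm (Su ** C)"
    by (simp only: matrix_mul_assoc[of left.residual] frobnorm_isometry_right[OF right.orthonormal]
        frobnorm_mult_eq_if_gram_eq[OF left.residual_gram])
  finally show ?thesis
    by (metis frobnorm_nonneg real_sqrt_unique)
qed

lemma specnorm_residuals:
  "specnorm (left.residual ** transpose right.residual) = specnorm (Su ** transpose Sv)"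
proof -
  have "specnorm (left.residual ** transpose right.residual) = specnorm (Su ** transpose right.residual)"
    by (rule specnorm_mult_eq_if_gram_eq[OF left.residual_gram])
  also have "\<dots> = specnorm (Su ** transpose Sv)"
    by (rule specnorm_mult_eq_if_cogram_eq) (simp add: right.residual_gram)
  finally show ?thesis .
qed

lemma norm_transpose_block_le:
  assumes x: "transpose left.residual *v x = transpose left.residual *v p"
    and "norm (transpose U *v x) \<le> 1" and "norm p \<le> \<beta>" and "1 \<le> \<beta>"
  shows "norm (transpose (block K B C) *v x)
    \<le> (specnorm K + specnorm (B ** transpose Sv) + specnorm (Su ** C)) * \<beta>"
proof -
  let ?a = "transpose U *v x"
  have "transpose (block K B C) *v x = V *v (transpose K *v ?a)
      - right.residual *v (transpose B *v ?a) - V *v (transpose C *v (transpose left.residual *v x))"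
    by (simp add: block_def transpose_diff matrix_transpose_mul matrix_vector_mult_diff_rdistrib
        flip: matrix_vector_mul_assoc)
  also have "\<dots> = V *v (transpose K *v ?a) - right.residual *v (transpose B *v ?a)
      - V *v (transpose (left.residual ** C) *v p)"
    by (simp add: x matrix_transpose_mul flip: matrix_vector_mul_assoc)
  finally have "norm (transpose (block K B C) *v x) \<le> norm (V *v (transpose K *v ?a))
      + norm (right.residual *v (transpose B *v ?a)) + norm (V *v (transpose (left.residual ** C) *v p))"
    by (simp only: order_trans[OF norm_triangle_ineq4 add_right_mono[OF norm_triangle_ineq4]])
  also have "norm (V *v (transpose K *v ?a)) \<le> specnorm K * norm ?a"
    by (simp add: norm_isometry right.orthonormal norm_transpose_bound)
  also have "norm (right.residual *v (transpose B *v ?a)) \<le> specnorm (B ** transpose Sv) * norm ?a"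
    using norm_transpose_bound[of "B ** transpose Sv" ?a]
    by (simp add: norm_mult_eq_if_gram_eq[OF right.residual_gram] matrix_transpose_mul
        flip: matrix_vector_mul_assoc)
  also have "norm (V *v (transpose (left.residual ** C) *v p)) \<le> specnorm (Su ** C) * norm p"
    using norm_transpose_bound[of "left.residual ** C" p]
    by (simp add: norm_isometry right.orthonormal specnorm_mult_eq_if_gram_eq[OF left.residual_gram])
  also have "specnorm K * norm ?a + specnorm (B ** transpose Sv) * norm ?a + specnorm (Su ** C) * norm p
      \<le> (specnorm K + specnorm (B ** transpose Sv) + specnorm (Su ** C)) * \<beta>"
    using weighted_sum_le[of "specnorm K" "specnorm (B ** transpose Sv)" "specnorm (Su ** C)" \<beta>
        "norm ?a" 1 "norm p" 1] assms(2-4)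
    by (simp add: specnorm_nonneg)
  finally show ?thesis
    by simp
qed

end

context principal_angle_pair
begin

lemma norm_block_le:
  assumes "transpose right.residual *v y = transpose right.residual *v q"
    and "norm (transpose V *v y) \<le> 1" and "norm q \<le> \<beta>" and "1 \<le> \<beta>"
  shows "norm (block K B C *v y)
    \<le> (specnorm K + specnorm (B ** transpose Sv) + specnorm (Su ** C)) * \<beta>"
proof -
  have "block K B C = transpose (swap.block (transpose K) (transpose C) (transpose B))"
    by (simp flip: transpose_block)
  moreover have "specnorm (transpose C ** transpose Su) = specnorm (Su ** C)"
    and "specnorm (Sv ** transpose B) = specnorm (B ** transpose Sv)"
    by (metis specnorm_transpose matrix_transpose_mul transpose_transpose)+
  ultimately show ?thesis
    using swap.norm_transpose_block_le[OF assms, of "transpose K" "transpose C" "transpose B"]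
    by (simp add: specnorm_transpose ac_simps)
qed

lemma abs_inner_block_le:
  assumes x: "transpose left.residual *v x = transpose left.residual *v p"
    and "norm (transpose U *v x) \<le> 1" and "norm p \<le> \<beta>"
    and y: "transpose right.residual *v y = transpose right.residual *v q"
    and "norm (transpose V *v y) \<le> 1" and "norm q \<le> \<beta>" and "1 \<le> \<beta>"
  shows "\<bar>inner x (block K B C *v y)\<bar>
    \<le> (specnorm K + specnorm (B ** transpose Sv) + specnorm (Su ** C)) * \<beta>"
proof -
  let ?a = "transpose U *v x" and ?b = "transpose V *v y"
  have "inner x (block K B C *v y) = inner ?a (K *v ?b)
      - inner ?a ((B ** transpose right.residual) *v q) - inner p ((left.residual ** C) *v ?b)"
  proof -
    have "inner x (block K B C *v y) = inner ?a (K *v ?b)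
        - inner ?a (B *v (transpose right.residual *v y))
        - inner (transpose left.residual *v x) (C *v ?b)"
      by (simp add: block_def matrix_vector_mult_diff_rdistrib inner_diff_right inner_matrix_vector_right
          flip: matrix_vector_mul_assoc)
    then show ?thesis
      by (simp add: x y inner_matrix_vector_right flip: matrix_vector_mul_assoc)
  qed
  also have "\<bar>\<dots>\<bar> \<le> specnorm K * norm ?a * norm ?b
      + specnorm (B ** transpose Sv) * norm ?a * norm q + specnorm (Su ** C) * norm p * norm ?b"
  proof -
    have "specnorm (B ** transpose right.residual) = specnorm (B ** transpose Sv)"
      by (rule specnorm_mult_eq_if_cogram_eq) (simp add: right.residual_gram)
    moreover have "specnorm (left.residual ** C) = specnorm (Su ** C)"
      by (rule specnorm_mult_eq_if_gram_eq[OF left.residual_gram])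
    ultimately show ?thesis
      using abs_inner_le_specnorm[of ?a K ?b]
        abs_inner_le_specnorm[of ?a "B ** transpose right.residual" q]
        abs_inner_le_specnorm[of p "left.residual ** C" ?b]
      by (intro order_trans[OF abs_triangle_ineq4 add_mono[OF order_trans[OF abs_triangle_ineq4]]]
          add_mono) simp_all
  qed
  also have "\<dots> \<le> (specnorm K + specnorm (B ** transpose Sv) + specnorm (Su ** C)) * \<beta>"
    by (rule weighted_sum_le) (use assms in \<open>simp_all add: specnorm_nonneg\<close>)
  finally show ?thesis .
qed


lemma mu_inf2_norm_block_le:
  assumes "\<And>i. leverage (span (columns U)) i > 0" and "\<And>j. leverage (span (columns V)) j > 0"
    and "sqrt (2 * Max {leverage (span (columns U \<union> columns Ut)) i
                          / leverage (span (columns U)) i | i. True}) \<le> \<beta>"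
    and "sqrt (2 * Max {leverage (span (columns V \<union> columns Vt)) j
                          / leverage (span (columns V)) j | j. True}) \<le> \<beta>"
    and "1 \<le> \<beta>"
  shows "mu_inf2_norm U V (block K B C)
    \<le> (specnorm K + specnorm (B ** transpose Sv) + specnorm (Su ** C)) * \<beta>" (is "_ \<le> ?bound")
proof -
  have "left.weight i * norm (row i (block K B C)) \<le> ?bound" for i
  proof -
    obtain p where p: "norm (transpose U *v (left.weight i *\<^sub>R axis i 1)) = 1" "norm p \<le> \<beta>"
      "transpose left.residual *v (left.weight i *\<^sub>R axis i 1) = transpose left.residual *v p"
      using left.weighted_axis assms(1,3) by blast
    from norm_transpose_block_le[OF p(3) p(1)[THEN eq_refl] p(2) \<open>1 \<le> \<beta>\<close>] show ?thesis
      using left.weight_nonneg[of i] by (simp add: matrix_vector_mult_scaleR matrix_vector_mult_basis)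
  qed
  moreover have "right.weight j * norm (column j (block K B C)) \<le> ?bound" for j
  proof -
    obtain q where q: "norm (transpose V *v (right.weight j *\<^sub>R axis j 1)) = 1" "norm q \<le> \<beta>"
      "transpose right.residual *v (right.weight j *\<^sub>R axis j 1) = transpose right.residual *v q"
      using right.weighted_axis assms(2,4) by blast
    from norm_block_le[OF q(3) q(1)[THEN eq_refl] q(2) \<open>1 \<le> \<beta>\<close>] show ?thesis
      using right.weight_nonneg[of j] by (simp add: matrix_vector_mult_scaleR matrix_vector_mult_basis)
  qed
  ultimately show ?thesis
    unfolding left.weight_def right.weight_def by (rule mu_inf2_norm_le)
qed

lemma mu_inf_norm_block_le:
  assumes "\<And>i. leverage (span (columns U)) i > 0" and "\<And>j. leverage (span (columns V)) j > 0"
    and "sqrt (2 * Max {leverage (span (columns U \<union> columns Ut)) i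
                          / leverage (span (columns U)) i | i. True}) \<le> \<beta>"
    and "sqrt (2 * Max {leverage (span (columns V \<union> columns Vt)) j
                          / leverage (span (columns V)) j | j. True}) \<le> \<beta>"
    and "1 \<le> \<beta>"
  shows "mu_inf_norm U V (block K B C)
    \<le> (specnorm K + specnorm (B ** transpose Sv) + specnorm (Su ** C)) * \<beta>" (is "_ \<le> ?bound")
proof -
  have "left.weight i * \<bar>block K B C $ i $ j\<bar> * right.weight j \<le> ?bound" for i j
  proof -
    obtain p where p: "norm (transpose U *v (left.weight i *\<^sub>R axis i 1)) = 1" "norm p \<le> \<beta>"
      "transpose left.residual *v (left.weight i *\<^sub>R axis i 1) = transpose left.residual *v p"
      using left.weighted_axis assms(1,3) by blast
    obtain q where q: "norm (transpose V *v (right.weight j *\<^sub>R axis j 1)) = 1" "norm q \<le> \<beta>"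
      "transpose right.residual *v (right.weight j *\<^sub>R axis j 1) = transpose right.residual *v q"
      using right.weighted_axis assms(2,4) by blast
    from abs_inner_block_le[where K = K and B = B and C = C,
        OF p(3) p(1)[THEN eq_refl] p(2) q(3) q(1)[THEN eq_refl] q(2) \<open>1 \<le> \<beta>\<close>]
    show ?thesis
      using left.weight_nonneg[of i] right.weight_nonneg[of j]
      by (simp add: matrix_vector_mult_scaleR matrix_vector_mult_basis abs_mult inner_axis'
          column_def ac_simps)
  qed
  then show ?thesis
    unfolding left.weight_def right.weight_def by (rule mu_inf_norm_le)
qed

end

theorem lemma8:
  fixes Xs :: "real^'n^'n"
    and U V Ut Vt :: "real^'r^'n"
    and LL RL LR RR :: "real^'r^'r"
    and \<gamma> \<eta> :: "real^'r"
    and lam :: real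
  assumes n_ge: "CARD('n) \<ge> 2 * CARD('r)"
    and rankX: "rank Xs = CARD('r)"
    and U_orth: "transpose U ** U = mat 1"
    and V_orth: "transpose V ** V = mat 1"
    and U_span: "span (columns U) = span (columns Xs)"
    and V_span: "span (columns V) = span (rows Xs)"
    and Ut_orth: "transpose Ut ** Ut = mat 1"
    and Vt_orth: "transpose Vt ** Vt = mat 1"
    and orthL: "orthogonal_matrix LL" "orthogonal_matrix RL"
               "orthogonal_matrix LR" "orthogonal_matrix RR"
    and gamma_range: "\<And>k. 0 \<le> \<gamma> $ k \<and> \<gamma> $ k \<le> pi / 2"
    and eta_range: "\<And>k. 0 \<le> \<eta> $ k \<and> \<eta> $ k \<le> pi / 2"
    and svdU: "transpose U ** Ut = LL ** diag_mat (\<chi> k. cos (\<gamma> $ k)) ** transpose RL"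
    and svdV: "transpose V ** Vt = LR ** diag_mat (\<chi> k. cos (\<eta> $ k)) ** transpose RR"
    and mu_pos: "\<And>i. leverage (span (columns U)) i > 0"
    and nu_pos: "\<And>j. leverage (span (columns V)) j > 0"
    and lam: "lam \<ge> 0"
  shows
    "let cG = diag_mat (\<chi> k. cos (\<gamma> $ k)); sG = diag_mat (\<chi> k. sin (\<gamma> $ k));
         cH = diag_mat (\<chi> k. cos (\<eta> $ k)); sH = diag_mat (\<chi> k. sin (\<eta> $ k));
         Acc = LL ** cG ** transpose RL ** RR ** cH ** transpose LR;
         Acs = LL ** cG ** transpose RL ** RR ** sH ** transpose LR;
         Asc = LL ** sG ** transpose RL ** RR ** cH ** transpose LR;
         Ass = LL ** sG ** transpose RL ** RR ** sH ** transpose LR;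
         W0 = U ** transpose V - lam *\<^sub>R PT U V (Ut ** transpose Vt);
         \<alpha>1 = sqrt ((frobnorm (mat 1 - lam *\<^sub>R Acc))^2 + (frobnorm (lam *\<^sub>R Acs))^2
                    + (frobnorm (lam *\<^sub>R Asc))^2);
         \<alpha>2 = specnorm (lam *\<^sub>R Ass);
         \<alpha>3 = specnorm (mat 1 - lam *\<^sub>R Acc) + specnorm (lam *\<^sub>R Asc) + specnorm (lam *\<^sub>R Acs);
         mub = leverage (span (columns U \<union> columns Ut));
         nub = leverage (span (columns V \<union> columns Vt));
         mu = leverage (span (columns U)); nu = leverage (span (columns V));
         \<beta> = max 1 (max (sqrt (2 * Max {mub i / mu i | i. True}))
                         (sqrt (2 * Max {nub j / nu j | j. True})))
     in frobnorm W0 = \<alpha>1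
        \<and> specnorm (lam *\<^sub>R PTperp U V (Ut ** transpose Vt)) = \<alpha>2
        \<and> mu_inf2_norm U V W0 \<le> \<alpha>3 * \<beta>
        \<and> mu_inf_norm U V W0 \<le> \<alpha>3 * \<beta>"
proof -
  let ?cG = "diag_mat (\<chi> k. cos (\<gamma> $ k))" and ?sG = "diag_mat (\<chi> k. sin (\<gamma> $ k))"
  let ?cH = "diag_mat (\<chi> k. cos (\<eta> $ k))" and ?sH = "diag_mat (\<chi> k. sin (\<eta> $ k))"
  let ?N = "transpose U ** Ut" and ?M = "transpose V ** Vt"
  let ?Su = "LL ** ?sG ** transpose RL" and ?Sv = "LR ** ?sH ** transpose RR"
  interpret principal_angle_pair U Ut ?Su V Vt ?Sv
    by (intro principal_angle_pair.intro principal_angles_svd svdU svdV orthL U_orth V_orth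
        Ut_orth Vt_orth)
  have products: "LL ** ?cG ** transpose RL ** RR ** ?cH ** transpose LR = ?N ** transpose ?M"
    "LL ** ?cG ** transpose RL ** RR ** ?sH ** transpose LR = ?N ** transpose ?Sv"
    "LL ** ?sG ** transpose RL ** RR ** ?cH ** transpose LR = ?Su ** transpose ?M"
    "LL ** ?sG ** transpose RL ** RR ** ?sH ** transpose LR = ?Su ** transpose ?Sv"
    by (simp_all add: svdU svdV transpose_svd matrix_mul_assoc)
  let ?K = "mat 1 - lam *\<^sub>R (?N ** transpose ?M)"
  let ?B = "lam *\<^sub>R ?N" and ?C = "lam *\<^sub>R transpose ?M"
  note \<beta>_bounds =
    max.coboundedI2[OF max.cobounded1] max.coboundedI2[OF max.cobounded2] max.cobounded1
  show ?thesis
    unfolding Let_def products tangent_decomposition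
    using frobnorm_block[of ?K ?B ?C] mu_inf2_norm_block_le[OF mu_pos nu_pos \<beta>_bounds, of ?K ?B ?C]
      mu_inf_norm_block_le[OF mu_pos nu_pos \<beta>_bounds, of ?K ?B ?C]
    by (simp add: PTperp_eq_residuals specnorm_residuals specnorm_scaleR matrix_scalar_ac ac_simps
        flip: scalar_matrix_assoc)
qed

end
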